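(* Let $\mathbf v\in\mathbb N_0^d$ and let $P(\mathbf x,t)=\sum_{\mathbf k\le\mathbf v}p_{\mathbf k}(t)\mathbf x^{\mathbf k}$, where $p_{\mathbf k}:[0,\infty)\to\mathbb R$. Then $P$ is time-space harmonic with respect to $\{t\cdot\boldsymbol\mu\}_{t\ge0}$ if and only if, for all $t\ge0$ and all $\mathbf k\le\mathbf v$, $$p_{\mathbf k}(t)=\sum_{\mathbf k\le\mathbf i\le\mathbf v}\binom{\mathbf i}{\mathbf k}\,p_{\mathbf i}(0)\,m_{\mathbf i-\mathbf k}(-t).$$ Equivalently, $P$ is time-space harmonic if and only if $P(\mathbf x,t)=\sum_{\mathbf k\le\mathbf v}p_{\mathbf k}(0)\,Q_{\mathbf k}(\mathbf x,t)$ for all $t\ge0$; in particular every time-space harmonic polynomial is a linear combination of the $Q_{\mathbf k}$.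
   Context: Fix $d\ge1$. Multi-index notation: for $\mathbf v\in\mathbb N_0^d$, $\mathbf v!=\prod_i v_i!$, $\mathbf x^{\mathbf v}=\prod_i x_i^{v_i}$; $\mathbf k\le\mathbf v$ means $k_i\le v_i$ for all $i$; $\binom{\mathbf v}{\mathbf k}=\prod_i\binom{v_i}{k_i}$. Let $\boldsymbol\mu$ be a $d$-tuple of umbral monomials with multivariate moments $g_{\mathbf v}=E[\boldsymbol\mu^{\mathbf v}]$, $g_{\mathbf 0}=1$, and generating function $f(\boldsymbol\mu,\mathbf z)=\sum_{\mathbf v}g_{\mathbf v}\mathbf z^{\mathbf v}/\mathbf v!$ (formal power series). For $t\in\mathbb R$, $t\cdot\boldsymbol\mu$ is the auxiliary umbral $d$-tuple with moments $m_{\mathbf v}(t)=E[(t\cdot\boldsymbol\mu)^{\mathbf v}]$ defined by $\sum_{\mathbf v}m_{\mathbf v}(t)\mathbf z^{\mathbf v}/\mathbf v!=f(\boldsymbol\mu,\mathbf z)^t=\exp(t\log f(\boldsymbol\mu,\mathbf z))$. $Q_{\mathbf k}(\mathbf x,t)=E[(\mathbf x-t\cdot\boldsymbol\mu)^{\mathbf k}]=\sum_{\mathbf i\le\mathbf k}\binom{\mathbf k}{\mathbf i}\mathbf x^{\mathbf k-\mathbf i}m_{\mathbf i}(-t)$. Time-space harmonicity: the conditional evaluation given $s\cdot\boldsymbol\mu$ is defined by linearity from $E[(t\cdot\boldsymbol\mu)^{\mathbf k}\mid s\cdot\boldsymbol\mu]=\sum_{\mathbf j\le\mathbf k}\binom{\mathbf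 k}{\mathbf j}(s\cdot\boldsymbol\mu)^{\mathbf j}m_{\mathbf k-\mathbf j}(t-s)$. $P(\mathbf x,t)=\sum_{\mathbf k\le\mathbf v}p_{\mathbf k}(t)\mathbf x^{\mathbf k}$ is time-space harmonic with respect to $\{t\cdot\boldsymbol\mu\}_{t\ge0}$ if $E[P(t\cdot\boldsymbol\mu,t)\mid s\cdot\boldsymbol\mu]=P(s\cdot\boldsymbol\mu,s)$ for all $0\le s\le t$, equality meaning equality of coefficients of each $(s\cdot\boldsymbol\mu)^{\mathbf j}$; explicitly: for all $0\le s\le t$ and all $\mathbf j\le\mathbf v$, $\sum_{\mathbf j\le\mathbf k\le\mathbf v}p_{\mathbf k}(t)\binom{\mathbf k}{\mathbf j}m_{\mathbf k-\mathbf j}(t-s)=p_{\mathbf j}(s)$. *)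

theory Defs
  imports Complex_Main
begin

text \<open>Multi-indices in N_0^d are functions 'd \<Rightarrow> nat for a finite type 'd
  (d = CARD('d) \<ge> 1).  The order on multi-indices is the pointwise order of
  functions; mi_sub v k is the pointwise difference (only used when k \<le> v).\<close>

definition mi_fact :: "('d::finite \<Rightarrow> nat) \<Rightarrow> real" where
  "mi_fact v = (\<Prod>i\<in>UNIV. fact (v i))"

definition mi_choose :: "('d::finite \<Rightarrow> nat) \<Rightarrow> ('d \<Rightarrow> nat) \<Rightarrow> real" where
  "mi_choose v k = (\<Prod>i\<in>UNIV. real (v i choose k i))"

definition mi_pow :: "('d::finite \<Rightarrow> real) \<Rightarrow> ('d \<Rightarrow> nat) \<Rightarrow> real" where
  "mi_pow x v = (\<Prod>i\<in>UNIV. x i ^ v i)"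

definition mi_size :: "('d::finite \<Rightarrow> nat) \<Rightarrow> nat" where
  "mi_size v = (\<Sum>i\<in>UNIV. v i)"

definition mi_sub :: "('d \<Rightarrow> nat) \<Rightarrow> ('d \<Rightarrow> nat) \<Rightarrow> 'd \<Rightarrow> nat" where
  "mi_sub v k = (\<lambda>i. v i - k i)"

text \<open>Multivariate formal power series in z_1..z_d over the reals, represented by
  their (ordinary) coefficient functions: a \<leftrightarrow> \<Sum>_v a v z^v.\<close>

definition ps_one :: "('d::finite \<Rightarrow> nat) \<Rightarrow> real" where
  "ps_one v = (if v = (\<lambda>_. 0) then 1 else 0)"

definition ps_mult :: "(('d::finite \<Rightarrow> nat) \<Rightarrow> real) \<Rightarrow> (('d \<Rightarrow> nat) \<Rightarrow> real) \<Rightarrow> ('d \<Rightarrow> nat) \<Rightarrow> real" where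
  "ps_mult a b v = (\<Sum>k\<in>{k. k \<le> v}. a k * b (mi_sub v k))"

fun ps_pow :: "(('d::finite \<Rightarrow> nat) \<Rightarrow> real) \<Rightarrow> nat \<Rightarrow> ('d \<Rightarrow> nat) \<Rightarrow> real" where
  "ps_pow a 0 = ps_one"
| "ps_pow a (Suc n) = ps_mult a (ps_pow a n)"

text \<open>Formal logarithm of a series with constant term 1:
  log a = \<Sum>_{n\<ge>1} (-1)^(n+1) (a - 1)^n / n.  Since (a-1)^n has no terms of total
  degree < n, the coefficient of z^v only receives contributions from n \<le> |v|,
  so the truncated sum below is exactly the coefficient of the full series.\<close>

definition ps_log :: "(('d::finite \<Rightarrow> nat) \<Rightarrow> real) \<Rightarrow> ('d \<Rightarrow> nat) \<Rightarrow> real" where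
  "ps_log a v = (\<Sum>n\<in>{1..mi_size v}.
      (-1) ^ (n + 1) / real n * ps_pow (\<lambda>w. a w - ps_one w) n v)"

text \<open>Formal exponential of a series with constant term 0:
  exp h = \<Sum>_{n\<ge>0} h^n / n!; again only n \<le> |v| contribute to the coefficient of z^v.\<close>

definition ps_exp :: "(('d::finite \<Rightarrow> nat) \<Rightarrow> real) \<Rightarrow> ('d \<Rightarrow> nat) \<Rightarrow> real" where
  "ps_exp h v = (\<Sum>n\<in>{0..mi_size v}. ps_pow h n v / fact n)"

text \<open>Moments m_v(t) of t\<cdot>\<mu>, where g are the moments of \<mu> (g 0 = 1):
  \<Sum>_v m_v(t) z^v / v! = exp(t log f(\<mu>,z)),  f(\<mu>,z) = \<Sum>_v g_v z^v / v!.\<close>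

definition umb_moment :: "(('d::finite \<Rightarrow> nat) \<Rightarrow> real) \<Rightarrow> real \<Rightarrow> ('d \<Rightarrow> nat) \<Rightarrow> real" where
  "umb_moment g t v =
     mi_fact v * ps_exp (\<lambda>w. t * ps_log (\<lambda>u. g u / mi_fact u) w) v"

text \<open>Q_k(x,t) = E[(x - t\<cdot>\<mu>)^k] = \<Sum>_{i\<le>k} C(k,i) x^(k-i) m_i(-t).\<close>

definition Q_poly :: "(('d::finite \<Rightarrow> nat) \<Rightarrow> real) \<Rightarrow> ('d \<Rightarrow> nat) \<Rightarrow> ('d \<Rightarrow> real) \<Rightarrow> real \<Rightarrow> real" where
  "Q_poly g k x t = (\<Sum>i\<in>{i. i \<le> k}. mi_choose k i * mi_pow x (mi_sub k i) * umb_moment g (-t) i)"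

text \<open>Time-space harmonicity of P(x,t) = \<Sum>_{k\<le>v} p_k(t) x^k, as an equality of
  coefficients of each (s\<cdot>\<mu>)^j.\<close>

definition tsh :: "(('d::finite \<Rightarrow> nat) \<Rightarrow> real) \<Rightarrow> ('d \<Rightarrow> nat) \<Rightarrow> (('d \<Rightarrow> nat) \<Rightarrow> real \<Rightarrow> real) \<Rightarrow> bool" where
  "tsh g v p \<longleftrightarrow> (\<forall>s t. 0 \<le> s \<and> s \<le> t \<longrightarrow> (\<forall>j. j \<le> v \<longrightarrow>
     (\<Sum>k\<in>{k. j \<le> k \<and> k \<le> v}. p k t * mi_choose k j * umb_moment g (t - s) (mi_sub k j)) = p j s))"

definition P_poly :: "('d::finite \<Rightarrow> nat) \<Rightarrow> (('d \<Rightarrow> nat) \<Rightarrow> real \<Rightarrow> real) \<Rightarrow> ('d \<Rightarrow> real) \<Rightarrow> real \<Rightarrow> real" where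
  "P_poly v p x t = (\<Sum>k\<in>{k. k \<le> v}. p k t * mi_pow x k)"

end

theory Submission
  imports Defs "HOL-Library.FuncSet"
begin

text \<open>Write \<open>T\<^sub>t\<close> for the map sending a coefficient vector \<open>c\<close> to
  \<open>k \<mapsto> \<Sum>\<^bsub>k \<le> i \<le> v\<^esub> C(i,k) c\<^sub>i m\<^bsub>i-k\<^esub>(t)\<close>. The moments of \<open>(a + b) \<cdot> \<mu>\<close> are the binomial
  convolution of those of \<open>a \<cdot> \<mu>\<close> and \<open>b \<cdot> \<mu>\<close>, because \<open>exp ((a + b) L) = exp (a L) exp (b L)\<close>
  for a series \<open>L\<close> without constant term; hence \<open>T\<^sub>a \<circ> T\<^sub>b = T\<^bsub>a+b\<^esub>\<close> and \<open>T\<^sub>0 = id\<close>.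
  Time-space harmonicity says that \<open>T\<^bsub>t-s\<^esub>\<close> maps the coefficients at time \<open>t\<close> to those at
  time \<open>s\<close>. Taking \<open>s = 0\<close> and applying \<open>T\<^bsub>-t\<^esub>\<close> gives \<open>p(t) = T\<^bsub>-t\<^esub> p(0)\<close>; conversely this
  formula yields \<open>T\<^bsub>t-s\<^esub> p(t) = T\<^bsub>-s\<^esub> p(0) = p(s)\<close>. The second characterisation is the first
  read off coefficientwise: \<open>\<Sum>\<^sub>k c\<^sub>k Q\<^sub>k(x,t)\<close> has coefficient vector \<open>T\<^bsub>-t\<^esub> c\<close>, and a
  polynomial function on \<open>\<real>\<^sup>d\<close> determines its coefficients.\<close>

section \<open>Multi-indices\<close>

lemma finite_mi_le: "finite {k::'d::finite \<Rightarrow> nat. k \<le> v}"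
proof (rule finite_subset)
  show "{k::'d \<Rightarrow> nat. k \<le> v} \<subseteq> PiE UNIV (\<lambda>i. {..v i})"
    by (auto simp: le_fun_def PiE_def extensional_def)
qed (simp add: finite_PiE)

lemma finite_mi_interval: "finite {k::'d::finite \<Rightarrow> nat. a \<le> k \<and> k \<le> v}"
  by (rule finite_subset[OF _ finite_mi_le[of v]]) auto

lemma mi_sub_le: "mi_sub k j \<le> k"
  by (simp add: mi_sub_def le_fun_def)

lemma mi_sub_sub_self: "j \<le> k \<Longrightarrow> mi_sub k (mi_sub k j) = j"
  by (auto simp: mi_sub_def le_fun_def fun_eq_iff)

lemma mi_sub_sub: "k \<le> m \<Longrightarrow> m \<le> v \<Longrightarrow> mi_sub (mi_sub v k) (mi_sub m k) = mi_sub v m"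
  by (auto simp: le_fun_def mi_sub_def fun_eq_iff)

lemma mi_sub_eq_0_iff: "k \<le> l \<Longrightarrow> mi_sub l k = (\<lambda>_. 0) \<longleftrightarrow> l = k"
  by (auto simp: mi_sub_def le_fun_def fun_eq_iff intro: antisym)

lemma mi_size_mono: "k \<le> w \<Longrightarrow> mi_size k \<le> mi_size w"
  unfolding mi_size_def by (rule sum_mono) (auto simp: le_fun_def)

lemma mi_size_sub: "k \<le> w \<Longrightarrow> mi_size (mi_sub w k) + mi_size k = mi_size w"
  unfolding mi_size_def mi_sub_def sum.distrib[symmetric]
  by (rule sum.cong) (auto simp: le_fun_def)

lemma mi_size_pos: "k \<noteq> (\<lambda>_. 0) \<Longrightarrow> 0 < mi_size k"
proof -
  assume "k \<noteq> (\<lambda>_. 0)"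
  then obtain i where "k i \<noteq> 0" by auto
  moreover have "k i \<le> mi_size k" unfolding mi_size_def by (rule member_le_sum) auto
  ultimately show ?thesis by linarith
qed

lemma sum_mi_le_sub_shift:
  assumes "k \<le> v"
  shows "(\<Sum>j\<in>{j. j \<le> mi_sub v k}. f j) = (\<Sum>m\<in>{m. k \<le> m \<and> m \<le> v}. f (mi_sub m k))"
proof (rule sum.reindex_bij_witness[where j="\<lambda>j i. k i + j i" and i="\<lambda>m. mi_sub m k"])
  fix j assume "j \<in> {j. j \<le> mi_sub v k}"
  then show "(\<lambda>i. k i + j i) \<in> {m. k \<le> m \<and> m \<le> v}"
    using assms by (auto simp: le_fun_def mi_sub_def) (metis add.commute le_diff_conv2)
next
  fix m assume "m \<in> {m. k \<le> m \<and> m \<le> v}"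
  then show "mi_sub m k \<in> {j. j \<le> mi_sub v k}"
    by (auto simp: le_fun_def mi_sub_def diff_le_mono)
qed (auto simp: le_fun_def mi_sub_def)

lemma sum_mi_interval_swap:
  fixes k v :: "'d::finite \<Rightarrow> nat"
  shows "(\<Sum>i\<in>{i. k \<le> i \<and> i \<le> v}. \<Sum>l\<in>{l. i \<le> l \<and> l \<le> v}. f i l)
     = (\<Sum>l\<in>{l. k \<le> l \<and> l \<le> v}. \<Sum>i\<in>{i. k \<le> i \<and> i \<le> l}. f i l)"
proof -
  have "(\<Sum>i\<in>{i. k \<le> i \<and> i \<le> v}. \<Sum>l\<in>{l. i \<le> l \<and> l \<le> v}. f i l)
      = (\<Sum>i\<in>{i. k \<le> i \<and> i \<le> v}. \<Sum>l\<in>{l. l \<in> {l. k \<le> l \<and> l \<le> v} \<and> i \<le> l}. f i l)"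
    by (rule sum.cong[OF refl], rule sum.cong[OF _ refl]) (auto; meson order_trans)
  also have "\<dots> = (\<Sum>l\<in>{l. k \<le> l \<and> l \<le> v}. \<Sum>i\<in>{i. i \<in> {i. k \<le> i \<and> i \<le> v} \<and> i \<le> l}. f i l)"
    by (rule sum.swap_restrict[OF finite_mi_interval finite_mi_interval])
  also have "\<dots> = (\<Sum>l\<in>{l. k \<le> l \<and> l \<le> v}. \<Sum>i\<in>{i. k \<le> i \<and> i \<le> l}. f i l)"
    by (rule sum.cong[OF refl], rule sum.cong[OF _ refl]) (auto; meson order_trans)
  finally show ?thesis .
qed

lemma mi_choose_self: "mi_choose k k = 1"
  by (simp add: mi_choose_def)

lemma mi_choose_sym: "j \<le> k \<Longrightarrow> mi_choose k (mi_sub k j) = mi_choose k j"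
  unfolding mi_choose_def mi_sub_def
  by (rule prod.cong[OF refl]) (metis binomial_symmetric le_fun_def)

lemma mi_choose_mult:
  assumes "j \<le> i" "i \<le> l"
  shows "mi_choose l i * mi_choose i j = mi_choose l j * mi_choose (mi_sub l j) (mi_sub i j)"
  unfolding mi_choose_def mi_sub_def prod.distrib[symmetric]
proof (rule prod.cong[OF refl])
  fix d
  have "(l d choose i d) * (i d choose j d) = (l d choose j d) * ((l d - j d) choose (i d - j d))"
    using assms by (intro choose_mult) (auto simp: le_fun_def)
  then show "real (l d choose i d) * real (i d choose j d)
      = real (l d choose j d) * real ((l d - j d) choose (i d - j d))"
    by (simp flip: of_nat_mult)
qed

lemma mi_choose_mult_fact:
  assumes "k \<le> w"
  shows "mi_choose w k * mi_fact k * mi_fact (mi_sub w k) = mi_fact w"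
  unfolding mi_choose_def mi_fact_def mi_sub_def prod.distrib[symmetric]
proof (rule prod.cong[OF refl])
  fix d
  have "real (fact (k d) * fact (w d - k d) * (w d choose k d)) = real (fact (w d))"
    using assms by (subst binomial_fact_lemma) (simp_all add: le_fun_def)
  then show "real (w d choose k d) * fact (k d) * fact (w d - k d) = fact (w d)"
    by (simp add: mult_ac)
qed

section \<open>Formal power series\<close>

lemma ps_mult_mi_sub:
  assumes "k \<le> v"
  shows "ps_mult a b (mi_sub v k) = (\<Sum>m\<in>{m. k \<le> m \<and> m \<le> v}. a (mi_sub m k) * b (mi_sub v m))"
  unfolding ps_mult_def sum_mi_le_sub_shift[OF assms]
  by (rule sum.cong) (auto simp: mi_sub_sub)

lemma ps_mult_assoc: "ps_mult a (ps_mult b c) v = ps_mult (ps_mult a b) c v"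
proof -
  have "ps_mult a (ps_mult b c) v
      = (\<Sum>k\<in>{k. k \<le> v}. \<Sum>m\<in>{m. m \<in> {m. m \<le> v} \<and> k \<le> m}. a k * (b (mi_sub m k) * c (mi_sub v m)))"
    unfolding ps_mult_def[of a]
    by (rule sum.cong) (auto simp: ps_mult_mi_sub sum_distrib_left intro!: sum.cong)
  also have "\<dots> = (\<Sum>m\<in>{m. m \<le> v}. \<Sum>k\<in>{k. k \<in> {k. k \<le> v} \<and> k \<le> m}. a k * (b (mi_sub m k) * c (mi_sub v m)))"
    by (rule sum.swap_restrict[OF finite_mi_le finite_mi_le])
  also have "\<dots> = ps_mult (ps_mult a b) c v"
    unfolding ps_mult_def by (auto simp: sum_distrib_right mult.assoc intro!: sum.cong)
  finally show ?thesis .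
qed

lemma ps_mult_one_left: "ps_mult ps_one a = a"
proof
  fix v
  have "ps_mult ps_one a v = (\<Sum>k\<in>{k. k \<le> v}. if k = (\<lambda>_. 0) then a (mi_sub v k) else 0)"
    unfolding ps_mult_def ps_one_def by (rule sum.cong) auto
  also have "\<dots> = a v"
    by (subst sum.delta[OF finite_mi_le]) (simp add: mi_sub_def le_fun_def)
  finally show "ps_mult ps_one a v = a v" .
qed

lemma ps_pow_add: "ps_pow h (m + n) = ps_mult (ps_pow h m) (ps_pow h n)"
proof (induction m)
  case (Suc m)
  show ?case by (simp add: Suc.IH fun_eq_iff ps_mult_assoc)
qed (simp add: ps_mult_one_left)

lemma ps_pow_eq_0:
  assumes "h (\<lambda>_. 0) = 0" "mi_size w < n"
  shows "ps_pow h n w = 0"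
  using assms(2)
proof (induction n arbitrary: w)
  case (Suc n)
  have "h k * ps_pow h n (mi_sub w k) = 0" if "k \<le> w" for k
  proof (cases "k = (\<lambda>_. 0)")
    case False
    have "mi_size (mi_sub w k) < n"
      using mi_size_sub[OF that] mi_size_pos[OF False] Suc.prems by linarith
    then show ?thesis using Suc.IH by simp
  qed (simp add: assms(1))
  then show ?case by (auto simp: ps_mult_def intro!: sum.neutral)
qed simp

lemma ps_pow_scale: "ps_pow (\<lambda>w. c * h w) n v = c ^ n * ps_pow h n v"
  by (induction n arbitrary: v) (simp_all add: ps_mult_def sum_distrib_left mult_ac)

lemma ps_exp_scale_eq_sum:
  assumes "h (\<lambda>_. 0) = 0" "mi_size w \<le> N"
  shows "ps_exp (\<lambda>w. c * h w) w = (\<Sum>n\<le>N. c ^ n / fact n * ps_pow h n w)"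
  unfolding ps_exp_def ps_pow_scale
  by (rule sum.mono_neutral_cong_left) (use assms ps_pow_eq_0[where h=h, OF assms(1)] in auto)

lemma ps_mult_sum:
  "ps_mult (\<lambda>k. \<Sum>i\<in>A. f i k) (\<lambda>k. \<Sum>j\<in>B. g j k) v = (\<Sum>i\<in>A. \<Sum>j\<in>B. ps_mult (f i) (g j) v)"
  unfolding ps_mult_def sum_product
  by (subst sum.swap) (simp add: sum.swap[of _ B])

lemma ps_mult_cong:
  "(\<And>k. k \<le> v \<Longrightarrow> a k = a' k) \<Longrightarrow> (\<And>k. k \<le> v \<Longrightarrow> b k = b' k) \<Longrightarrow> ps_mult a b v = ps_mult a' b' v"
  unfolding ps_mult_def by (rule sum.cong) (auto simp: le_fun_def mi_sub_def)

lemma sum_binomial_convolution: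
  fixes f :: "nat \<Rightarrow> real"
  assumes "\<And>n. N < n \<Longrightarrow> f n = 0"
  shows "(\<Sum>i\<le>N. \<Sum>j\<le>N. s ^ i / fact i * (t ^ j / fact j) * f (i + j)) = (\<Sum>n\<le>N. (s + t) ^ n / fact n * f n)"
proof -
  define c where "c i j = s ^ i / fact i * (t ^ j / fact j) * f (i + j)" for i j
  have "(\<Sum>i\<le>N. \<Sum>j\<le>N. c i j) = (\<Sum>(i, j)\<in>{..N} \<times> {..N}. c i j)"
    by (simp add: sum.cartesian_product)
  also have "\<dots> = (\<Sum>(i, j)\<in>{(i, j). i + j \<le> N}. c i j)"
    by (rule sum.mono_neutral_right) (auto simp: c_def, metis assms not_le)
  also have "\<dots> = (\<Sum>n\<le>N. \<Sum>i\<le>n. c i (n - i))"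
    by (rule sum.triangle_reindex_eq)
  also have "\<dots> = (\<Sum>n\<le>N. (s + t) ^ n / fact n * f n)"
  proof (rule sum.cong[OF refl])
    fix n
    have "(s + t) ^ n / fact n = (\<Sum>i\<le>n. s ^ i / fact i * (t ^ (n - i) / fact (n - i)))"
      unfolding binomial_ring sum_divide_distrib
      by (rule sum.cong[OF refl]) (simp add: binomial_fact)
    then show "(\<Sum>i\<le>n. c i (n - i)) = (s + t) ^ n / fact n * f n"
      by (simp add: c_def sum_distrib_right)
  qed
  finally show ?thesis unfolding c_def .
qed

lemma ps_exp_scale_add:
  assumes h0: "h (\<lambda>_. 0) = 0"
  shows "ps_mult (ps_exp (\<lambda>w. s * h w)) (ps_exp (\<lambda>w. t * h w)) v = ps_exp (\<lambda>w. (s + t) * h w) v"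
proof -
  define N where "N = mi_size v"
  have "ps_mult (ps_exp (\<lambda>w. s * h w)) (ps_exp (\<lambda>w. t * h w)) v
      = ps_mult (\<lambda>k. \<Sum>i\<le>N. s ^ i / fact i * ps_pow h i k) (\<lambda>k. \<Sum>j\<le>N. t ^ j / fact j * ps_pow h j k) v"
    by (intro ps_mult_cong ps_exp_scale_eq_sum[where h=h, OF h0]) (auto simp: N_def mi_size_mono)
  also have "\<dots> = (\<Sum>i\<le>N. \<Sum>j\<le>N. s ^ i / fact i * (t ^ j / fact j) * ps_pow h (i + j) v)"
    unfolding ps_mult_sum ps_pow_add
    by (intro sum.cong refl) (simp add: ps_mult_def sum_distrib_left mult_ac)
  also have "\<dots> = (\<Sum>n\<le>N. (s + t) ^ n / fact n * ps_pow h n v)"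
    by (rule sum_binomial_convolution) (simp add: N_def ps_pow_eq_0[where h=h, OF h0])
  also have "\<dots> = ps_exp (\<lambda>w. (s + t) * h w) v"
    by (rule ps_exp_scale_eq_sum[where h=h, OF h0, symmetric]) (simp add: N_def)
  finally show ?thesis .
qed

section \<open>Moments of \<open>t \<cdot> \<mu>\<close>\<close>

lemma ps_log_const: "ps_log a (\<lambda>_. 0) = 0"
  by (simp add: ps_log_def mi_size_def)

lemma umb_moment_zero: "umb_moment g 0 w = (if w = (\<lambda>_. 0) then 1 else 0)"
proof -
  have "ps_exp (\<lambda>w. 0 * ps_log (\<lambda>u. g u / mi_fact u) w) w = ps_one w"
    unfolding ps_exp_def ps_pow_scale by (subst sum.remove[of _ 0]) (auto simp: power_0_left)
  then show ?thesis by (simp add: umb_moment_def ps_one_def mi_fact_def)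
qed

lemma umb_moment_add:
  "umb_moment g (a + b) w
     = (\<Sum>k\<in>{k. k \<le> w}. mi_choose w k * umb_moment g a k * umb_moment g b (mi_sub w k))"
proof -
  define E where "E c = ps_exp (\<lambda>w. c * ps_log (\<lambda>u. g u / mi_fact u) w)" for c
  have moment: "umb_moment g c w = mi_fact w * E c w" for c w
    by (simp add: umb_moment_def E_def)
  have "umb_moment g (a + b) w = (\<Sum>k\<in>{k. k \<le> w}. mi_fact w * (E a k * E b (mi_sub w k)))"
    by (simp add: moment E_def ps_exp_scale_add[symmetric] ps_log_const ps_mult_def sum_distrib_left)
  also have "\<dots> = (\<Sum>k\<in>{k. k \<le> w}. mi_choose w k * umb_moment g a k * umb_moment g b (mi_sub w k))"
  proof (rule sum.cong[OF refl])
    fix k assume "k \<in> {k. k \<le> w}"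
    then show "mi_fact w * (E a k * E b (mi_sub w k))
        = mi_choose w k * umb_moment g a k * umb_moment g b (mi_sub w k)"
      by (simp add: moment mi_choose_mult_fact[symmetric] mult_ac)
  qed
  finally show ?thesis .
qed

lemma umb_moment_add_binomial:
  assumes "j \<le> l"
  shows "(\<Sum>i\<in>{i. j \<le> i \<and> i \<le> l}.
            mi_choose l i * mi_choose i j * umb_moment g a (mi_sub i j) * umb_moment g b (mi_sub l i))
       = mi_choose l j * umb_moment g (a + b) (mi_sub l j)"
proof -
  have "(\<Sum>i\<in>{i. j \<le> i \<and> i \<le> l}.
            mi_choose l i * mi_choose i j * umb_moment g a (mi_sub i j) * umb_moment g b (mi_sub l i))
      = mi_choose l j * (\<Sum>i\<in>{i. j \<le> i \<and> i \<le> l}. mi_choose (mi_sub l j) (mi_sub i j)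
            * umb_moment g a (mi_sub i j) * umb_moment g b (mi_sub (mi_sub l j) (mi_sub i j)))"
    unfolding sum_distrib_left
    by (rule sum.cong) (auto simp only: mem_Collect_eq mi_choose_mult mi_sub_sub mult.assoc)
  also have "\<dots> = mi_choose l j * umb_moment g (a + b) (mi_sub l j)"
    by (simp add: umb_moment_add sum_mi_le_sub_shift[OF assms])
  finally show ?thesis .
qed

section \<open>Evolution of coefficient vectors\<close>

text \<open>\<open>moment_transform g v t c\<close> is the coefficient vector of
  \<open>x \<mapsto> E[\<Sum>\<^sub>i c\<^sub>i (x + t \<cdot> \<mu>)\<^sup>i]\<close>; it is the operator \<open>T\<^sub>t\<close> above.\<close>

definition moment_transform ::
    "(('d::finite \<Rightarrow> nat) \<Rightarrow> real) \<Rightarrow> ('d \<Rightarrow> nat) \<Rightarrow> real \<Rightarrow> (('d \<Rightarrow> nat) \<Rightarrow> real) \<Rightarrow> ('d \<Rightarrow> nat) \<Rightarrow> real"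
  where "moment_transform g v t c k =
    (\<Sum>i\<in>{i. k \<le> i \<and> i \<le> v}. mi_choose i k * c i * umb_moment g t (mi_sub i k))"

lemma moment_transform_cong:
  "(\<And>i. i \<le> v \<Longrightarrow> c i = c' i) \<Longrightarrow> moment_transform g v t c k = moment_transform g v t c' k"
  unfolding moment_transform_def by (rule sum.cong) auto

lemma moment_transform_zero:
  assumes "k \<le> v"
  shows "moment_transform g v 0 c k = c k"
proof -
  have "moment_transform g v 0 c k = (\<Sum>i\<in>{i. k \<le> i \<and> i \<le> v}. if i = k then c k else 0)"
    unfolding moment_transform_def
    by (rule sum.cong) (auto simp: umb_moment_zero mi_sub_eq_0_iff mi_choose_self)
  also have "\<dots> = c k"
    using assms by (subst sum.delta[OF finite_mi_interval]) simp
  finally show ?thesis .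
qed

lemma moment_transform_add:
  assumes "k \<le> v"
  shows "moment_transform g v a (moment_transform g v b c) k = moment_transform g v (a + b) c k"
proof -
  have "moment_transform g v a (moment_transform g v b c) k
      = (\<Sum>i\<in>{i. k \<le> i \<and> i \<le> v}. \<Sum>l\<in>{l. i \<le> l \<and> l \<le> v}. c l *
          (mi_choose l i * mi_choose i k * umb_moment g a (mi_sub i k) * umb_moment g b (mi_sub l i)))"
    unfolding moment_transform_def
    by (intro sum.cong refl) (simp add: sum_distrib_left sum_distrib_right mult_ac)
  also have "\<dots> = (\<Sum>l\<in>{l. k \<le> l \<and> l \<le> v}. \<Sum>i\<in>{i. k \<le> i \<and> i \<le> l}. c l *
          (mi_choose l i * mi_choose i k * umb_moment g a (mi_sub i k) * umb_moment g b (mi_sub l i)))"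
    by (rule sum_mi_interval_swap)
  also have "\<dots> = (\<Sum>l\<in>{l. k \<le> l \<and> l \<le> v}. c l * (mi_choose l k * umb_moment g (a + b) (mi_sub l k)))"
    by (intro sum.cong refl) (simp add: umb_moment_add_binomial flip: sum_distrib_left)
  also have "\<dots> = moment_transform g v (a + b) c k"
    unfolding moment_transform_def by (intro sum.cong refl) (simp add: mult_ac)
  finally show ?thesis .
qed

lemma tsh_iff_moment_transform:
  "tsh g v p \<longleftrightarrow> (\<forall>s t. 0 \<le> s \<and> s \<le> t \<longrightarrow>
     (\<forall>j. j \<le> v \<longrightarrow> moment_transform g v (t - s) (\<lambda>k. p k t) j = p j s))"
  unfolding tsh_def moment_transform_def by (simp add: mult_ac)

lemma tsh_iff_evolution:
  "tsh g v p \<longleftrightarrow> (\<forall>t\<ge>0. \<forall>k. k \<le> v \<longrightarrow> p k t = moment_transform g v (-t) (\<lambda>i. p i 0) k)"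
proof
  assume tsh: "tsh g v p"
  show "\<forall>t\<ge>0. \<forall>k. k \<le> v \<longrightarrow> p k t = moment_transform g v (-t) (\<lambda>i. p i 0) k"
  proof (intro allI impI)
    fix t :: real and k assume "0 \<le> t" "k \<le> v"
    have "moment_transform g v (t - 0) (\<lambda>l. p l t) i = p i 0" if "i \<le> v" for i
      using tsh \<open>0 \<le> t\<close> that unfolding tsh_iff_moment_transform by blast
    then have "moment_transform g v (-t) (\<lambda>i. p i 0) k
        = moment_transform g v (-t) (moment_transform g v t (\<lambda>l. p l t)) k"
      by (intro moment_transform_cong) simp
    also have "\<dots> = p k t"
      using \<open>k \<le> v\<close> by (simp add: moment_transform_add moment_transform_zero)
    finally show "p k t = moment_transform g v (-t) (\<lambda>i. p i 0) k" by simp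
  qed
next
  assume evolution: "\<forall>t\<ge>0. \<forall>k. k \<le> v \<longrightarrow> p k t = moment_transform g v (-t) (\<lambda>i. p i 0) k"
  show "tsh g v p"
    unfolding tsh_iff_moment_transform
  proof (intro allI impI, elim conjE)
    fix s t :: real and j assume "0 \<le> s" "s \<le> t" "j \<le> v"
    have "moment_transform g v (t - s) (\<lambda>k. p k t) j
        = moment_transform g v (t - s) (moment_transform g v (-t) (\<lambda>i. p i 0)) j"
      using evolution \<open>0 \<le> s\<close> \<open>s \<le> t\<close> by (intro moment_transform_cong) simp
    also have "\<dots> = moment_transform g v (-s) (\<lambda>i. p i 0) j"
      using \<open>j \<le> v\<close> by (simp add: moment_transform_add)
    also have "\<dots> = p j s"
      using evolution \<open>0 \<le> s\<close> \<open>j \<le> v\<close> by simp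
    finally show "moment_transform g v (t - s) (\<lambda>k. p k t) j = p j s" .
  qed
qed

section \<open>Polynomial functions on \<open>\<real>\<^sup>d\<close>\<close>

lemma mi_pow_fun_upd:
  assumes "k d = 0"
  shows "mi_pow (x(d := y)) (k(d := n)) = mi_pow x k * y ^ n"
proof -
  have "mi_pow (x(d := y)) (k(d := n)) = y ^ n * (\<Prod>i\<in>UNIV - {d}. x i ^ k i)"
    unfolding mi_pow_def by (subst prod.remove[of _ d]) (auto intro!: prod.cong)
  moreover have "mi_pow x k = (\<Prod>i\<in>UNIV - {d}. x i ^ k i)"
    unfolding mi_pow_def using assms by (subst prod.remove[of _ d]) auto
  ultimately show ?thesis by simp
qed

lemma sum_mi_le_fun_upd:
  fixes v :: "'d::finite \<Rightarrow> nat"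
  shows "(\<Sum>k\<in>{k. k \<le> v}. f k) = (\<Sum>n\<le>v d. \<Sum>k\<in>{k. k \<le> v(d := 0)}. f (k(d := n)))"
proof -
  have "(\<Sum>n\<le>v d. \<Sum>k\<in>{k. k \<le> v(d := 0)}. f (k(d := n)))
      = (\<Sum>(n, k)\<in>{..v d} \<times> {k. k \<le> v(d := 0)}. f (k(d := n)))"
    by (simp add: sum.cartesian_product)
  also have "\<dots> = (\<Sum>k\<in>{k. k \<le> v}. f k)"
    by (rule sum.reindex_bij_witness[where i="\<lambda>k. (k d, k(d := 0))" and j="\<lambda>(n, k). k(d := n)"])
       (auto simp: le_fun_def fun_eq_iff, metis le_zero_eq, metis)
  finally show ?thesis by simp
qed

lemma mi_poly_fun_upd:
  "(\<Sum>k\<in>{k. k \<le> v}. a k * mi_pow (x(d := y)) k)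
     = (\<Sum>n\<le>v d. (\<Sum>k\<in>{k. k \<le> v(d := 0)}. a (k(d := n)) * mi_pow x k) * y ^ n)"
  unfolding sum_mi_le_fun_upd[of _ v d] sum_distrib_right
proof (intro sum.cong refl)
  fix n k assume "k \<in> {k. k \<le> v(d := 0)}"
  then have "k d = 0" by (simp add: le_fun_def) (metis fun_upd_same le_zero_eq)
  then show "a (k(d := n)) * mi_pow (x(d := y)) (k(d := n)) = a (k(d := n)) * mi_pow x k * y ^ n"
    by (simp add: mi_pow_fun_upd)
qed

lemma mi_poly_eq_0_on_support:
  assumes "\<forall>i. i \<notin> D \<longrightarrow> v i = 0" "\<forall>x. (\<Sum>k\<in>{k. k \<le> v}. a k * mi_pow x k) = 0" "k \<le> v"
  shows "a k = 0"
  using finite[of D] assms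
proof (induction D arbitrary: v a k rule: finite_induct)
  case empty
  then have v0: "v = (\<lambda>_. 0)" by auto
  with empty.prems(3) have "k = v" "{k. k \<le> v} = {v}"
    by (auto simp: le_fun_def fun_eq_iff)
  then show ?case using empty.prems(2) v0 by (simp add: mi_pow_def)
next
  case (insert d D)
  define v' where "v' = v(d := 0)"
  have coeff: "(\<Sum>k'\<in>{k'. k' \<le> v'}. a (k'(d := n)) * mi_pow x k') = 0" if "n \<le> v d" for n x
  proof -
    define c where "c n = (\<Sum>k'\<in>{k'. k' \<le> v'}. a (k'(d := n)) * mi_pow x k')" for n
    have "(\<Sum>n\<le>v d. c n * y ^ n) = 0" for y
      using insert.prems(2)[rule_format, of "x(d := y)"] by (simp only: c_def v'_def mi_poly_fun_upd)
    then show ?thesis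
      using polyfun_eq_0[of c "v d"] that by (simp add: c_def)
  qed
  have "k d \<le> v d"
    using insert.prems(3) by (simp add: le_fun_def)
  have "\<forall>i. i \<notin> D \<longrightarrow> v' i = 0"
    using insert.prems(1) by (simp add: v'_def)
  moreover have "\<forall>x. (\<Sum>k'\<in>{k'. k' \<le> v'}. a (k'(d := k d)) * mi_pow x k') = 0"
    using coeff \<open>k d \<le> v d\<close> by blast
  moreover have "k(d := 0) \<le> v'"
    using insert.prems(3) by (simp add: v'_def le_fun_def)
  ultimately have "a ((k(d := 0))(d := k d)) = 0"
    by (rule insert.IH[of v' "\<lambda>k'. a (k'(d := k d))" "k(d := 0)"])
  then show ?case by simp
qed

lemma mi_poly_eq_iff:
  "(\<forall>x. (\<Sum>k\<in>{k. k \<le> v}. a k * mi_pow x k) = (\<Sum>k\<in>{k. k \<le> v}. b k * mi_pow x k))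
     \<longleftrightarrow> (\<forall>k. k \<le> v \<longrightarrow> a k = b k)"
proof
  assume eq: "\<forall>x. (\<Sum>k\<in>{k. k \<le> v}. a k * mi_pow x k) = (\<Sum>k\<in>{k. k \<le> v}. b k * mi_pow x k)"
  have "(\<Sum>k\<in>{k. k \<le> v}. (a k - b k) * mi_pow x k)
      = (\<Sum>k\<in>{k. k \<le> v}. a k * mi_pow x k) - (\<Sum>k\<in>{k. k \<le> v}. b k * mi_pow x k)" for x
    by (simp add: left_diff_distrib sum_subtractf)
  with eq have zero: "\<forall>x. (\<Sum>k\<in>{k. k \<le> v}. (a k - b k) * mi_pow x k) = 0"
    by simp
  have "a k - b k = 0" if "k \<le> v" for k
    by (rule mi_poly_eq_0_on_support[of UNIV, OF _ zero that]) simp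
  then show "\<forall>k. k \<le> v \<longrightarrow> a k = b k" by simp
next
  assume "\<forall>k. k \<le> v \<longrightarrow> a k = b k"
  then show "\<forall>x. (\<Sum>k\<in>{k. k \<le> v}. a k * mi_pow x k) = (\<Sum>k\<in>{k. k \<le> v}. b k * mi_pow x k)"
    by (intro allI sum.cong) simp_all
qed

lemma Q_poly_reflected:
  "Q_poly g k x t = (\<Sum>j\<in>{j. j \<le> k}. mi_choose k j * mi_pow x j * umb_moment g (-t) (mi_sub k j))"
  unfolding Q_poly_def
  by (rule sum.reindex_bij_witness[where i="\<lambda>j. mi_sub k j" and j="\<lambda>i. mi_sub k i"])
     (auto simp: mi_sub_sub_self mi_sub_le mi_choose_sym)

lemma sum_Q_poly:
  "(\<Sum>k\<in>{k. k \<le> v}. c k * Q_poly g k x t)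
     = (\<Sum>j\<in>{j. j \<le> v}. moment_transform g v (-t) c j * mi_pow x j)"
proof -
  have "(\<Sum>k\<in>{k. k \<le> v}. c k * Q_poly g k x t)
      = (\<Sum>k\<in>{k. k \<le> v}. \<Sum>j\<in>{j. j \<in> {j. j \<le> v} \<and> j \<le> k}.
           mi_choose k j * c k * umb_moment g (-t) (mi_sub k j) * mi_pow x j)"
  proof (rule sum.cong[OF refl])
    fix k assume "k \<in> {k. k \<le> v}"
    then have "{j. j \<in> {j. j \<le> v} \<and> j \<le> k} = {j. j \<le> k}" by (auto intro: order_trans)
    then show "c k * Q_poly g k x t = (\<Sum>j\<in>{j. j \<in> {j. j \<le> v} \<and> j \<le> k}.
           mi_choose k j * c k * umb_moment g (-t) (mi_sub k j) * mi_pow x j)"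
      unfolding Q_poly_reflected sum_distrib_left by (simp add: mult_ac)
  qed
  also have "\<dots> = (\<Sum>j\<in>{j. j \<le> v}. \<Sum>k\<in>{k. k \<in> {k. k \<le> v} \<and> j \<le> k}.
           mi_choose k j * c k * umb_moment g (-t) (mi_sub k j) * mi_pow x j)"
    by (rule sum.swap_restrict[OF finite_mi_le finite_mi_le])
  also have "\<dots> = (\<Sum>j\<in>{j. j \<le> v}. moment_transform g v (-t) c j * mi_pow x j)"
    unfolding moment_transform_def sum_distrib_right by (intro sum.cong refl) auto
  finally show ?thesis .
qed

theorem mainTheorem6:
  fixes g :: "('d::finite \<Rightarrow> nat) \<Rightarrow> real"
    and v :: "'d \<Rightarrow> nat"
    and p :: "('d \<Rightarrow> nat) \<Rightarrow> real \<Rightarrow> real"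
  assumes g0: "g (\<lambda>_. 0) = 1"
  shows "(tsh g v p \<longleftrightarrow>
            (\<forall>t\<ge>0. \<forall>k. k \<le> v \<longrightarrow>
               p k t = (\<Sum>i\<in>{i. k \<le> i \<and> i \<le> v}.
                          mi_choose i k * p i 0 * umb_moment g (-t) (mi_sub i k))))
       \<and> (tsh g v p \<longleftrightarrow>
            (\<forall>t\<ge>0. \<forall>x. P_poly v p x t = (\<Sum>k\<in>{k. k \<le> v}. p k 0 * Q_poly g k x t)))"
proof -
  have coefficients_iff:
    "(\<forall>x. P_poly v p x t = (\<Sum>k\<in>{k. k \<le> v}. p k 0 * Q_poly g k x t))
       \<longleftrightarrow> (\<forall>k. k \<le> v \<longrightarrow> p k t = moment_transform g v (-t) (\<lambda>i. p i 0) k)" for t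
    unfolding P_poly_def sum_Q_poly by (rule mi_poly_eq_iff)
  show ?thesis
    unfolding coefficients_iff tsh_iff_evolution by (simp add: moment_transform_def)
qed

end
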